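(* Let $a\ge0$, $N\ge2$, and let $X_t$ be the continuous-time Markov chain on $\{0,1,\dots,N\}$ with transitions $j\to j+1$ at rate $a\,j(j-1)(N-j)/(N(N-1))$ and $j\to j-1$ at rate $j$, started from $X_0=N$. For $j=1,\dots,N$ let $\tau_j=\int_0^\infty P(X_t=j\mid X_0=N)\,dt$. Then $$\sum_{j=1}^N j\,\tau_j\le\sum_{j=1}^N\sum_{i=0}^j(a/4)^i.$$
   Context: The chain $X_t$ is the number of individuals in a single patch of the $N$-patch model when the outer birth rate is $b=0$. *)

theory Defs
  imports "HOL-Analysis.Analysis"
begin

definition up_rate :: "real \<Rightarrow> nat \<Rightarrow> nat \<Rightarrow> real" where
  "up_rate a N j = a * real j * (real j - 1) * (real N - real j) / (real N * (real N - 1))"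

definition down_rate :: "nat \<Rightarrow> real" where
  "down_rate j = real j"

definition gen :: "real \<Rightarrow> nat \<Rightarrow> nat \<Rightarrow> nat \<Rightarrow> real" where
  "gen a N i j =
     (if i \<le> N \<and> j \<le> N then
        (if j = i + 1 then up_rate a N i
         else if i = j + 1 then down_rate i
         else if i = j then - (up_rate a N i + down_rate i)
         else 0)
      else 0)"

fun gen_pow :: "real \<Rightarrow> nat \<Rightarrow> nat \<Rightarrow> nat \<Rightarrow> nat \<Rightarrow> real" where
  "gen_pow a N 0 i j = (if i = j then 1 else 0)"
| "gen_pow a N (Suc n) i j = (\<Sum>k\<in>{0..N}. gen_pow a N n i k * gen a N k j)"

text \<open>Transition function P(X_t = j | X_0 = i) = (exp (t Q))_{ij} of the finite-state CTMC.\<close>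
definition trans_prob :: "real \<Rightarrow> nat \<Rightarrow> real \<Rightarrow> nat \<Rightarrow> nat \<Rightarrow> real" where
  "trans_prob a N t i j = (\<Sum>n. t ^ n / fact n * gen_pow a N n i j)"

definition occ_time :: "real \<Rightarrow> nat \<Rightarrow> nat \<Rightarrow> real" where
  "occ_time a N j = (LBINT t:{0..}. trans_prob a N t N j)"

end

theory Submission
  imports Defs
begin

text \<open>Let \<open>P(t) = exp (t Q)\<close>. If \<open>f \<ge> 0\<close> solves the Poisson equation \<open>(Q f)(k) = -k\<close>,
  integrating the forward equation \<open>P' = P Q\<close> over \<open>[0, T]\<close> gives Dynkin's formula: the
  integral over \<open>[0, T]\<close> of \<open>\<Sum>\<^sub>k k \<cdot> P(t)(N, k)\<close> equals \<open>f(N) - (P(T) f)(N) \<le> f(N)\<close>, since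
  \<open>P(t) \<ge> 0\<close> (the off-diagonal rates are nonnegative); monotone convergence lets \<open>T \<rightarrow> \<infinity>\<close>.
  Solving the Poisson equation from the top state down, the increments \<open>e(k) = f(k) - f(k - 1)\<close>
  satisfy \<open>e(N) = 1\<close> and \<open>e(k) = 1 + (up_rate k / k) \<cdot> e(k + 1)\<close>. By AM-GM
  \<open>up_rate k / k \<le> a / 4\<close>, hence \<open>e(k) \<le> \<Sum>\<^sub>i\<^sub>\<le>\<^sub>N\<^sub>-\<^sub>k (a / 4)\<^sup>i\<close>, and \<open>f(N) = \<Sum>\<^sub>k e(k)\<close> is at
  most the right-hand side.\<close>

section \<open>Powers of finite matrices\<close>

fun mat_pow :: "(nat \<Rightarrow> nat \<Rightarrow> real) \<Rightarrow> nat \<Rightarrow> nat \<Rightarrow> nat \<Rightarrow> nat \<Rightarrow> real" where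
  "mat_pow A N 0 i j = (if i = j then 1 else 0)"
| "mat_pow A N (Suc n) i j = (\<Sum>k\<in>{0..N}. mat_pow A N n i k * A k j)"

lemma mat_pow_nonneg:
  assumes "\<And>k l. k \<le> N \<Longrightarrow> l \<le> N \<Longrightarrow> 0 \<le> A k l" and "j \<le> N"
  shows "0 \<le> mat_pow A N n i j"
  using assms(2) by (induction n arbitrary: j) (auto intro!: sum_nonneg mult_nonneg_nonneg assms(1))

lemma mat_pow_abs_le:
  assumes "\<And>k l. k \<le> N \<Longrightarrow> l \<le> N \<Longrightarrow> \<bar>A k l\<bar> \<le> C" and "0 \<le> C" and "j \<le> N"
  shows "\<bar>mat_pow A N n i j\<bar> \<le> (real (N + 1) * C) ^ n"
  using assms(3)
proof (induction n arbitrary: j)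
  case (Suc n)
  have "\<bar>mat_pow A N (Suc n) i j\<bar> \<le> (\<Sum>k\<in>{0..N}. \<bar>mat_pow A N n i k\<bar> * \<bar>A k j\<bar>)"
    unfolding mat_pow.simps abs_mult[symmetric] by (rule sum_abs)
  also have "\<dots> \<le> (\<Sum>k\<in>{0..N}. (real (N + 1) * C) ^ n * C)"
    using Suc by (intro sum_mono mult_mono Suc.IH assms(1)) (auto simp: assms(2))
  finally show ?case by (simp add: mult_ac)
qed simp

lemma mat_pow_geometric_bound: "\<exists>K. \<forall>n j. j \<le> N \<longrightarrow> \<bar>mat_pow A N n i j\<bar> \<le> K ^ n"
proof -
  define C where "C = (\<Sum>k\<in>{0..N}. \<Sum>l\<in>{0..N}. \<bar>A k l\<bar>)"
  have "\<bar>A k l\<bar> \<le> C" if "k \<le> N" "l \<le> N" for k l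
  proof -
    have "\<bar>A k l\<bar> \<le> (\<Sum>l\<in>{0..N}. \<bar>A k l\<bar>)" using that by (intro member_le_sum) auto
    also have "\<dots> \<le> C" unfolding C_def using that
      by (intro member_le_sum[where f = "\<lambda>k. \<Sum>l\<in>{0..N}. \<bar>A k l\<bar>"]) (auto intro: sum_nonneg)
    finally show ?thesis .
  qed
  moreover have "0 \<le> C" unfolding C_def by (intro sum_nonneg) auto
  ultimately show ?thesis by (blast intro: mat_pow_abs_le)
qed

lemma binomial_convolution_Suc:
  fixes x :: "nat \<Rightarrow> real"
  shows "(\<Sum>m\<le>n. real (n choose m) * c ^ (n - m) * x (Suc m))
      + (\<Sum>m\<le>n. real (n choose m) * c ^ (Suc n - m) * x m)
      = (\<Sum>m\<le>Suc n. real (Suc n choose m) * c ^ (Suc n - m) * x m)"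
proof -
  have "(\<Sum>m\<le>Suc n. real (Suc n choose m) * c ^ (Suc n - m) * x m)
      = c ^ Suc n * x 0 + (\<Sum>m\<le>n. real (Suc n choose Suc m) * c ^ (n - m) * x (Suc m))"
    by (subst sum.atMost_Suc_shift) simp
  also have "\<dots> = c ^ Suc n * x 0 + (\<Sum>m\<le>n. real (n choose Suc m) * c ^ (n - m) * x (Suc m))
      + (\<Sum>m\<le>n. real (n choose m) * c ^ (n - m) * x (Suc m))"
    by (simp add: sum.distrib distrib_right)
  also have "c ^ Suc n * x 0 + (\<Sum>m\<le>n. real (n choose Suc m) * c ^ (n - m) * x (Suc m))
      = (\<Sum>m\<le>Suc n. real (n choose m) * c ^ (Suc n - m) * x m)"
    by (subst sum.atMost_Suc_shift) simp
  also have "\<dots> = (\<Sum>m\<le>n. real (n choose m) * c ^ (Suc n - m) * x m)"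
    by simp
  finally show ?thesis by simp
qed

lemma mat_pow_add_diag:
  assumes "j \<le> N"
  shows "mat_pow (\<lambda>k l. A k l + (if k = l then c else 0)) N n i j
        = (\<Sum>m\<le>n. real (n choose m) * c ^ (n - m) * mat_pow A N m i j)"
  using assms
proof (induction n arbitrary: j)
  case (Suc n)
  let ?x = "\<lambda>k m. mat_pow A N m i k"
  let ?S = "\<lambda>k. \<Sum>m\<le>n. real (n choose m) * c ^ (n - m) * ?x k m"
  have "mat_pow (\<lambda>k l. A k l + (if k = l then c else 0)) N (Suc n) i j
      = (\<Sum>k\<in>{0..N}. ?S k * A k j) + c * ?S j"
  proof -
    have "mat_pow (\<lambda>k l. A k l + (if k = l then c else 0)) N (Suc n) i j
        = (\<Sum>k\<in>{0..N}. ?S k * A k j + (if k = j then c * ?S k else 0))"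
      unfolding mat_pow.simps(2) by (intro sum.cong refl) (auto simp: Suc.IH algebra_simps)
    then show ?thesis using Suc.prems by (simp add: sum.distrib)
  qed
  also have "(\<Sum>k\<in>{0..N}. ?S k * A k j) = (\<Sum>m\<le>n. real (n choose m) * c ^ (n - m) * ?x j (Suc m))"
    by (simp only: sum_distrib_right mat_pow.simps sum_distrib_left mult.assoc) (rule sum.swap)
  also have "c * ?S j = (\<Sum>m\<le>n. real (n choose m) * c ^ (Suc n - m) * ?x j m)"
    by (simp add: sum_distrib_left Suc_diff_le mult.assoc mult.left_commute)
  also have "(\<Sum>m\<le>n. real (n choose m) * c ^ (n - m) * ?x j (Suc m))
      + (\<Sum>m\<le>n. real (n choose m) * c ^ (Suc n - m) * ?x j m)
      = (\<Sum>m\<le>Suc n. real (Suc n choose m) * c ^ (Suc n - m) * ?x j m)"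
    by (rule binomial_convolution_Suc)
  finally show ?case .
qed simp

section \<open>Power series of exponential type\<close>

lemma summable_abs_exp_series:
  fixes c :: "nat \<Rightarrow> real"
  assumes "\<And>n. \<bar>c n\<bar> \<le> K ^ n"
  shows "summable (\<lambda>n. \<bar>t ^ n / fact n * c n\<bar>)"
proof (rule summable_comparison_test'[OF summable_exp[of "\<bar>K\<bar> * \<bar>t\<bar>"]])
  fix n
  have "\<bar>c n\<bar> \<le> \<bar>K\<bar> ^ n" using assms[of n] by (metis abs_ge_self order_trans power_abs)
  then have "\<bar>t ^ n / fact n * c n\<bar> \<le> \<bar>t\<bar> ^ n / fact n * \<bar>K\<bar> ^ n"
    by (simp add: abs_mult power_abs divide_right_mono mult_left_mono)
  also have "\<dots> = inverse (fact n) * (\<bar>K\<bar> * \<bar>t\<bar>) ^ n"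
    by (simp add: power_mult_distrib field_simps)
  finally show "norm \<bar>t ^ n / fact n * c n\<bar> \<le> inverse (fact n) * (\<bar>K\<bar> * \<bar>t\<bar>) ^ n"
    by simp
qed

lemma summable_exp_series:
  fixes c :: "nat \<Rightarrow> real"
  assumes "\<And>n. \<bar>c n\<bar> \<le> K ^ n"
  shows "summable (\<lambda>n. t ^ n / fact n * c n)"
  by (rule summable_rabs_cancel[OF summable_abs_exp_series[OF assms]])

lemma isCont_exp_series:
  fixes c :: "nat \<Rightarrow> real"
  assumes "\<And>n. \<bar>c n\<bar> \<le> K ^ n"
  shows "isCont (\<lambda>t. \<Sum>n. t ^ n / fact n * c n) t"
proof -
  have "isCont (\<lambda>t. \<Sum>n. c n / fact n * t ^ n) t"
    using summable_exp_series[OF assms]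
    by (intro isCont_powser_converges_everywhere) (simp add: mult.commute)
  then show ?thesis by (simp add: mult.commute)
qed

lemma summable_exp_series_integral:
  fixes c :: "nat \<Rightarrow> real"
  assumes "\<And>n. \<bar>c n\<bar> \<le> K ^ n"
  shows "summable (\<lambda>n. T ^ Suc n / fact (Suc n) * c n)"
proof (rule summable_comparison_test')
  show "summable (\<lambda>n. \<bar>T\<bar> * \<bar>T ^ n / fact n * c n\<bar>)"
    by (intro summable_mult summable_abs_exp_series[OF assms])
  fix n
  have shrink: "x / real (Suc n) \<le> x" if "0 \<le> x" for x :: real
    using that by (simp add: divide_le_eq mult_le_cancel_left1)
  have "norm (T ^ Suc n / fact (Suc n) * c n) = \<bar>T\<bar> * \<bar>T ^ n / fact n * c n\<bar> / real (Suc n)"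
    by (simp add: abs_mult power_abs field_simps)
  then show "norm (T ^ Suc n / fact (Suc n) * c n) \<le> \<bar>T\<bar> * \<bar>T ^ n / fact n * c n\<bar>"
    using shrink[of "\<bar>T\<bar> * \<bar>T ^ n / fact n * c n\<bar>"] by simp
qed

lemma exp_series_has_integral:
  fixes c :: "nat \<Rightarrow> real"
  assumes "\<And>n. \<bar>c n\<bar> \<le> K ^ n" and "0 \<le> T"
  shows "((\<lambda>t. \<Sum>n. t ^ n / fact n * c n) has_integral (\<Sum>n. T ^ Suc n / fact (Suc n) * c n)) {0..T}"
proof -
  define d where "d n = (if n = 0 then 0 else c (n - 1) / fact n)" for n
  have d_Suc: "d (Suc n) * y ^ Suc n = y ^ Suc n / fact (Suc n) * c n" for n y
    by (simp add: d_def)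
  have diffs_d: "diffs d = (\<lambda>n. c n / fact n)"
  proof
    fix n
    have "(fact (Suc n) :: real) = real (Suc n) * fact n" by simp
    then show "diffs d n = c n / fact n"
      unfolding diffs_def d_def by (simp del: of_nat_Suc fact_Suc)
  qed
  have summable_d: "summable (\<lambda>n. d n * y ^ n)" for y
  proof -
    have "summable (\<lambda>n. d (Suc n) * y ^ Suc n)"
      using summable_exp_series_integral[OF assms(1), of y] by (simp only: d_Suc)
    then show ?thesis by (rule summable_Suc_iff[where f = "\<lambda>n. d n * y ^ n", THEN iffD1])
  qed
  define F where "F y = (\<Sum>n. d n * y ^ n)" for y
  have F_deriv: "(F has_field_derivative (\<Sum>n. y ^ n / fact n * c n)) (at y)" for y
    using termdiffs_strong_converges_everywhere[OF summable_d, of y]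
    unfolding F_def[abs_def] diffs_d by (simp add: mult.commute)
  have "(\<lambda>n. d n * 0 ^ n) = (\<lambda>n. 0)" by (auto simp: d_def)
  then have F0: "F 0 = 0" by (simp add: F_def)
  have "F T = (\<Sum>n. d (Suc n) * T ^ Suc n)"
    using suminf_split_head[OF summable_d[of T]] by (simp add: F_def d_def)
  then have FT: "F T = (\<Sum>n. T ^ Suc n / fact (Suc n) * c n)"
    by (simp only: d_Suc)
  show ?thesis
    using F0 FT fundamental_theorem_of_calculus[of 0 T F] F_deriv assms(2)
    by (simp add: has_real_derivative_iff_has_vector_derivative[symmetric] has_field_derivative_at_within)
qed

section \<open>The matrix exponential\<close>

definition mat_exp :: "(nat \<Rightarrow> nat \<Rightarrow> real) \<Rightarrow> nat \<Rightarrow> real \<Rightarrow> nat \<Rightarrow> nat \<Rightarrow> real" where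
  "mat_exp A N t i j = (\<Sum>n. t ^ n / fact n * mat_pow A N n i j)"

lemma mat_exp_has_integral:
  assumes "j \<le> N" and "0 \<le> T"
  shows "((\<lambda>t. mat_exp A N t i j) has_integral (\<Sum>n. T ^ Suc n / fact (Suc n) * mat_pow A N n i j)) {0..T}"
proof -
  obtain K where "\<And>n. \<bar>mat_pow A N n i j\<bar> \<le> K ^ n"
    using mat_pow_geometric_bound assms(1) by blast
  then show ?thesis unfolding mat_exp_def by (rule exp_series_has_integral[OF _ assms(2)])
qed

lemma isCont_mat_exp:
  assumes "j \<le> N"
  shows "isCont (\<lambda>t. mat_exp A N t i j) t"
proof -
  obtain K where "\<And>n. \<bar>mat_pow A N n i j\<bar> \<le> K ^ n"
    using mat_pow_geometric_bound assms by blast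
  then show ?thesis unfolding mat_exp_def[abs_def] by (rule isCont_exp_series)
qed

lemma mat_exp_integral_forward:
  assumes "j \<le> N" and "0 \<le> T"
  shows "(\<Sum>k\<in>{0..N}. integral {0..T} (\<lambda>t. mat_exp A N t i k) * A k j)
       = mat_exp A N T i j - (if i = j then 1 else 0)"
proof -
  obtain K where K: "\<And>n k. k \<le> N \<Longrightarrow> \<bar>mat_pow A N n i k\<bar> \<le> K ^ n"
    using mat_pow_geometric_bound by blast
  let ?c = "\<lambda>n k. T ^ Suc n / fact (Suc n) * mat_pow A N n i k"
  have summable: "summable (\<lambda>n. ?c n k)" if "k \<le> N" for k
    using K[OF that] by (rule summable_exp_series_integral)
  have integral: "integral {0..T} (\<lambda>t. mat_exp A N t i k) = (\<Sum>n. ?c n k)" if "k \<le> N" for k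
    using mat_exp_has_integral[OF that assms(2)] by (rule integral_unique)
  have "(\<Sum>k\<in>{0..N}. integral {0..T} (\<lambda>t. mat_exp A N t i k) * A k j)
      = (\<Sum>k\<in>{0..N}. \<Sum>n. ?c n k * A k j)"
  proof (rule sum.cong)
    fix k assume "k \<in> {0..N}"
    then have k: "k \<le> N" by simp
    show "integral {0..T} (\<lambda>t. mat_exp A N t i k) * A k j = (\<Sum>n. ?c n k * A k j)"
      by (simp only: integral[OF k] suminf_mult2[OF summable[OF k]])
  qed simp
  also have "\<dots> = (\<Sum>n. \<Sum>k\<in>{0..N}. ?c n k * A k j)"
    by (rule suminf_sum[symmetric]) (use summable_mult2[OF summable] in simp)
  also have "\<dots> = (\<Sum>n. T ^ Suc n / fact (Suc n) * mat_pow A N (Suc n) i j)"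
    by (simp add: sum_distrib_left mult.assoc)
  also have "\<dots> = mat_exp A N T i j - (if i = j then 1 else 0)"
    using suminf_split_head[OF summable_exp_series[OF K[OF assms(1)], of T]]
    unfolding mat_exp_def by (simp del: mat_pow.simps(2) fact_Suc power_Suc)
  finally show ?thesis .
qed

lemma mat_exp_add_diag:
  assumes "j \<le> N"
  shows "mat_exp A N t i j * exp (c * t) = mat_exp (\<lambda>k l. A k l + (if k = l then c else 0)) N t i j"
proof -
  obtain K where K: "\<And>n. \<bar>mat_pow A N n i j\<bar> \<le> K ^ n"
    using mat_pow_geometric_bound assms by blast
  define u where "u n = t ^ n / fact n * mat_pow A N n i j" for n
  define v where "v n = (c * t) ^ n / fact n" for n
  have "exp (c * t) = (\<Sum>n. v n)"
    using exp_converges[of "c * t"] by (simp add: v_def sums_iff divide_inverse mult.commute)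
  moreover have "summable (\<lambda>n. norm (v n))"
    using summable_norm_exp[of "c * t"] by (simp add: v_def divide_inverse mult.commute)
  moreover have "summable (\<lambda>n. norm (u n))"
    using summable_abs_exp_series[OF K] by (simp add: u_def)
  ultimately have "mat_exp A N t i j * exp (c * t) = (\<Sum>n. \<Sum>m\<le>n. u m * v (n - m))"
    unfolding mat_exp_def u_def[symmetric] by (simp only: Cauchy_product)
  also have "\<dots> = (\<Sum>n. t ^ n / fact n * mat_pow (\<lambda>k l. A k l + (if k = l then c else 0)) N n i j)"
  proof (rule suminf_cong)
    fix n
    have "u m * v (n - m) = t ^ n / fact n * (real (n choose m) * c ^ (n - m) * mat_pow A N m i j)"
      if "m \<le> n" for m
    proof -
      have "t ^ n = t ^ m * t ^ (n - m)" using that by (simp flip: power_add)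
      then show ?thesis
        unfolding u_def v_def binomial_fact[OF that] by (simp add: power_mult_distrib field_simps)
    qed
    then show "(\<Sum>m\<le>n. u m * v (n - m))
        = t ^ n / fact n * mat_pow (\<lambda>k l. A k l + (if k = l then c else 0)) N n i j"
      by (simp add: mat_pow_add_diag[OF assms] sum_distrib_left)
  qed
  finally show ?thesis unfolding mat_exp_def .
qed

lemma mat_exp_nonneg_of_nonneg:
  assumes "\<And>k l. k \<le> N \<Longrightarrow> l \<le> N \<Longrightarrow> 0 \<le> A k l" and "j \<le> N" and "0 \<le> t"
  shows "0 \<le> mat_exp A N t i j"
proof -
  obtain K where K: "\<And>n. \<bar>mat_pow A N n i j\<bar> \<le> K ^ n"
    using mat_pow_geometric_bound assms(2) by blast
  show ?thesis
    unfolding mat_exp_def using assms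
    by (intro suminf_nonneg summable_exp_series[OF K] mult_nonneg_nonneg mat_pow_nonneg) auto
qed

lemma mat_exp_nonneg:
  assumes "\<And>k l. k \<le> N \<Longrightarrow> l \<le> N \<Longrightarrow> k \<noteq> l \<Longrightarrow> 0 \<le> A k l" and "j \<le> N" and "0 \<le> t"
  shows "0 \<le> mat_exp A N t i j"
proof -
  define c where "c = (\<Sum>k\<in>{0..N}. \<bar>A k k\<bar>)"
  have "\<bar>A k k\<bar> \<le> c" if "k \<le> N" for k
    unfolding c_def using that by (intro member_le_sum[where f = "\<lambda>k. \<bar>A k k\<bar>"]) auto
  then have "0 \<le> A k l + (if k = l then c else 0)" if "k \<le> N" "l \<le> N" for k l
    using assms(1)[OF that] that by (cases "k = l") force+
  then have "0 \<le> mat_exp A N t i j * exp (c * t)"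
    unfolding mat_exp_add_diag[OF assms(2)] using assms(2,3) by (rule mat_exp_nonneg_of_nonneg)
  then show ?thesis by (simp add: zero_le_mult_iff)
qed

lemma mat_exp_dynkin:
  assumes "\<And>k. k \<le> N \<Longrightarrow> (\<Sum>l\<in>{0..N}. A k l * f l) = - g k" and "i \<le> N" and "0 \<le> T"
  shows "(\<Sum>k\<in>{0..N}. g k * integral {0..T} (\<lambda>t. mat_exp A N t i k))
       = f i - (\<Sum>j\<in>{0..N}. mat_exp A N T i j * f j)"
proof -
  let ?I = "\<lambda>k. integral {0..T} (\<lambda>t. mat_exp A N t i k)"
  have "(\<Sum>k\<in>{0..N}. g k * ?I k) = - (\<Sum>k\<in>{0..N}. ?I k * (\<Sum>l\<in>{0..N}. A k l * f l))"
    using assms(1) by (simp add: sum_negf mult.commute)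
  also have "(\<Sum>k\<in>{0..N}. ?I k * (\<Sum>l\<in>{0..N}. A k l * f l))
      = (\<Sum>l\<in>{0..N}. (\<Sum>k\<in>{0..N}. ?I k * A k l) * f l)"
    by (simp add: sum_distrib_left sum_distrib_right mult.assoc) (rule sum.swap)
  also have "\<dots> = (\<Sum>l\<in>{0..N}. mat_exp A N T i l * f l - (if i = l then f l else 0))"
    using assms(3) by (intro sum.cong refl) (simp add: mat_exp_integral_forward left_diff_distrib)
  also have "\<dots> = (\<Sum>j\<in>{0..N}. mat_exp A N T i j * f j) - f i"
    using assms(2) by (simp add: sum_subtractf)
  finally show ?thesis by simp
qed

section \<open>Occupation times\<close>

lemma set_integral_atLeast_0_le:
  fixes h :: "real \<Rightarrow> real"
  assumes cont: "continuous_on {0..} h" and nonneg: "\<And>t. 0 \<le> t \<Longrightarrow> 0 \<le> h t"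
    and bounded: "\<And>T. 0 \<le> T \<Longrightarrow> integral {0..T} h \<le> B"
  shows "set_integrable lborel {0..} h" and "(LBINT t:{0..}. h t) \<le> B"
proof -
  have measurable: "(\<lambda>t. indicator S t * h t) \<in> borel_measurable lborel" if "S \<subseteq> {0..}" "S \<in> sets borel" for S
    using borel_measurable_continuous_on_indicator[OF that(2) continuous_on_subset[OF cont that(1)]]
    by simp
  define f where "f n t = ennreal (indicator {0..real n} t * h t)" for n :: nat and t
  have f_measurable: "f n \<in> borel_measurable lborel" for n
    unfolding f_def using measurable[of "{0..real n}"] by simp
  have incseq: "incseq f"
    by (intro monoI le_funI) (auto simp: f_def nonneg split: split_indicator)
  have SUP_f: "(SUP n. f n t) = ennreal (indicator {0..} t * h t)" for t
  proof (cases "0 \<le> t")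
    case True
    obtain n :: nat where "t \<le> real n" using real_arch_simple by blast
    then have "ennreal (h t) \<le> (SUP n. f n t)"
      using True by (intro SUP_upper2[where i = n]) (simp_all add: f_def)
    moreover have "f m t \<le> ennreal (h t)" for m
      using True nonneg by (auto simp: f_def split: split_indicator)
    ultimately have "(SUP n. f n t) = ennreal (h t)"
      by (intro antisym SUP_least) auto
    then show ?thesis using True by simp
  qed (simp add: f_def)
  have "(\<integral>\<^sup>+t. ennreal (indicator {0..} t * h t) \<partial>lborel) = (SUP n. integral\<^sup>N lborel (f n))"
    using nn_integral_monotone_convergence_SUP[OF incseq f_measurable] by (simp add: SUP_f)
  also have "\<dots> \<le> ennreal B"
  proof (rule SUP_least)
    fix n :: nat
    have "h integrable_on {0..real n}"
      by (rule integrable_continuous_interval, rule continuous_on_subset[OF cont]) auto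
    then have "(h has_integral integral {0..real n} h) {0..real n}"
      by (rule integrable_integral)
    then have "integral\<^sup>N lborel (f n) = ennreal (integral {0..real n} h)"
      unfolding f_def using nonneg by (intro nn_integral_has_integral_lebesgue) auto
    then show "integral\<^sup>N lborel (f n) \<le> ennreal B" by (simp add: bounded ennreal_leI)
  qed
  finally have nn_le: "(\<integral>\<^sup>+t. ennreal (indicator {0..} t * h t) \<partial>lborel) \<le> ennreal B" .
  have norm_eq: "norm (indicator {0..} t *\<^sub>R h t) = indicator {0..} t * h t" for t :: real
    using nonneg by (auto split: split_indicator)
  have "(\<integral>\<^sup>+t. ennreal (norm (indicator {0..} t *\<^sub>R h t)) \<partial>lborel) < \<infinity>"
    unfolding norm_eq using nn_le by (rule le_less_trans) simp
  then show "set_integrable lborel {0..} h"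
    unfolding set_integrable_def using measurable[of "{0..}"] by (intro integrableI_bounded) simp_all
  have "0 \<le> B" using bounded[of 0] by simp
  then show "(LBINT t:{0..}. h t) \<le> B"
    unfolding set_lebesgue_integral_def using measurable[of "{0..}"] nn_le nonneg
    by (subst integral_eq_nn_integral) (auto intro!: enn2real_leI split: split_indicator)
qed

lemma sum_set_integral_atLeast_0_le:
  fixes \<phi> :: "'i \<Rightarrow> real \<Rightarrow> real"
  assumes "finite I" and cont: "\<And>k t. k \<in> I \<Longrightarrow> isCont (\<phi> k) t"
    and nonneg: "\<And>k t. k \<in> I \<Longrightarrow> 0 \<le> t \<Longrightarrow> 0 \<le> \<phi> k t"
    and bounded: "\<And>T. 0 \<le> T \<Longrightarrow> (\<Sum>k\<in>I. integral {0..T} (\<phi> k)) \<le> B"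
  shows "(\<Sum>k\<in>I. LBINT t:{0..}. \<phi> k t) \<le> B"
proof -
  define h where "h t = (\<Sum>k\<in>I. \<phi> k t)" for t
  have h_cont: "continuous_on {0..} h"
    unfolding h_def using cont by (intro continuous_at_imp_continuous_on ballI continuous_sum) auto
  have h_nonneg: "0 \<le> h t" if "0 \<le> t" for t
    unfolding h_def using nonneg that by (intro sum_nonneg) auto
  have "integral {0..T} h \<le> B" if "0 \<le> T" for T
  proof -
    have "\<phi> k integrable_on {0..T}" if "k \<in> I" for k
      using cont[OF that] by (intro integrable_continuous_interval continuous_at_imp_continuous_on) auto
    then show ?thesis
      unfolding h_def[abs_def] using bounded[OF that] by (subst integral_sum) (auto simp: assms(1))
  qed
  note integrable = set_integral_atLeast_0_le(1)[OF h_cont h_nonneg this]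
    and le = set_integral_atLeast_0_le(2)[OF h_cont h_nonneg this]
  have integrable_k: "set_integrable lborel {0..} (\<phi> k)" if "k \<in> I" for k
  proof (rule set_integrable_bound[OF integrable])
    show "set_borel_measurable lborel {0..} (\<phi> k)"
      unfolding set_borel_measurable_def
      using borel_measurable_continuous_on_indicator[of "{0..}" "\<phi> k"] cont[OF that]
      by (simp add: continuous_at_imp_continuous_on)
    have "\<phi> k t \<le> h t" if "0 \<le> t" for t
      unfolding h_def using \<open>k \<in> I\<close> that nonneg
      by (intro member_le_sum[where f = "\<lambda>k. \<phi> k t"] assms(1)) auto
    then show "AE t in lborel. t \<in> {0..} \<longrightarrow> norm (\<phi> k t) \<le> norm (h t)"
      using \<open>k \<in> I\<close> nonneg h_nonneg by (intro AE_I2) auto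
  qed
  have "(LBINT t:{0..}. h t) = (\<Sum>k\<in>I. LBINT t:{0..}. \<phi> k t)"
    unfolding set_lebesgue_integral_def h_def scaleR_sum_right
    using integrable_k unfolding set_integrable_def by (intro Bochner_Integration.integral_sum) auto
  then show ?thesis using le by simp
qed

lemma mat_exp_occupation_bound:
  assumes metzler: "\<And>k l. k \<le> N \<Longrightarrow> l \<le> N \<Longrightarrow> k \<noteq> l \<Longrightarrow> 0 \<le> A k l"
    and f_nonneg: "\<And>k. k \<le> N \<Longrightarrow> 0 \<le> f k" and g_nonneg: "\<And>k. k \<le> N \<Longrightarrow> 0 \<le> g k"
    and poisson: "\<And>k. k \<le> N \<Longrightarrow> (\<Sum>l\<in>{0..N}. A k l * f l) = - g k" and "i \<le> N"
  shows "(\<Sum>k\<in>{0..N}. g k * (LBINT t:{0..}. mat_exp A N t i k)) \<le> f i"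
proof -
  have p_nonneg: "0 \<le> mat_exp A N t i k" if "k \<le> N" "0 \<le> t" for k t
    using metzler that by (rule mat_exp_nonneg)
  have "(\<Sum>k\<in>{0..N}. LBINT t:{0..}. g k * mat_exp A N t i k) \<le> f i"
  proof (rule sum_set_integral_atLeast_0_le)
    fix T :: real assume "0 \<le> T"
    have "(\<Sum>k\<in>{0..N}. integral {0..T} (\<lambda>t. g k * mat_exp A N t i k))
        = f i - (\<Sum>j\<in>{0..N}. mat_exp A N T i j * f j)"
      using mat_exp_dynkin[OF poisson assms(5) \<open>0 \<le> T\<close>] by simp
    also have "\<dots> \<le> f i"
      using \<open>0 \<le> T\<close> by (auto intro!: sum_nonneg mult_nonneg_nonneg p_nonneg f_nonneg)
    finally show "(\<Sum>k\<in>{0..N}. integral {0..T} (\<lambda>t. g k * mat_exp A N t i k)) \<le> f i" .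
  qed (auto intro!: continuous_intros isCont_mat_exp mult_nonneg_nonneg g_nonneg p_nonneg)
  then show ?thesis by simp
qed

section \<open>The birth-death chain\<close>

lemma gen_pow_eq_mat_pow: "gen_pow a N n i j = mat_pow (gen a N) N n i j"
  by (induction n arbitrary: j) simp_all

lemma occ_time_eq_mat_exp: "occ_time a N j = (LBINT t:{0..}. mat_exp (gen a N) N t N j)"
  unfolding occ_time_def trans_prob_def mat_exp_def gen_pow_eq_mat_pow ..

lemma up_rate_nonneg:
  assumes "0 \<le> a" and "j \<le> N"
  shows "0 \<le> up_rate a N j"
  unfolding up_rate_def using assms by (cases j) (auto intro!: divide_nonneg_nonneg mult_nonneg_nonneg)

lemma gen_offdiag_nonneg:
  assumes "0 \<le> a" and "k \<le> N" and "k \<noteq> l"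
  shows "0 \<le> gen a N k l"
  unfolding gen_def down_rate_def using up_rate_nonneg[OF assms(1,2)] assms(3) by auto

definition up_ratio :: "real \<Rightarrow> nat \<Rightarrow> nat \<Rightarrow> real" where
  "up_ratio a N j = a * (real j - 1) * (real N - real j) / (real N * (real N - 1))"

lemma up_rate_eq_up_ratio: "up_rate a N j = real j * up_ratio a N j"
  unfolding up_rate_def up_ratio_def by simp

lemma up_ratio_nonneg:
  assumes "0 \<le> a" and "2 \<le> N" and "1 \<le> j" and "j \<le> N"
  shows "0 \<le> up_ratio a N j"
  unfolding up_ratio_def using assms by (intro divide_nonneg_nonneg mult_nonneg_nonneg) auto

lemma up_ratio_le:
  assumes "0 \<le> a" and "2 \<le> N" and "1 \<le> j" and "j \<le> N"
  shows "up_ratio a N j \<le> a / 4"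
proof -
  have "4 * ((real j - 1) * (real N - real j)) \<le> ((real j - 1) + (real N - real j))\<^sup>2"
    using zero_le_power2[of "(real j - 1) - (real N - real j)"] by (simp add: power2_eq_square algebra_simps)
  also have "\<dots> \<le> real N * (real N - 1)"
    using assms by (simp add: power2_eq_square)
  finally have "a * (4 * ((real j - 1) * (real N - real j))) \<le> a * (real N * (real N - 1))"
    using assms(1) by (rule mult_left_mono)
  moreover have "0 < real N * (real N - 1)" using assms(2) by simp
  ultimately show ?thesis unfolding up_ratio_def by (simp add: field_simps)
qed

text \<open>\<open>lyap_incr a N m\<close> is the increment \<open>e(N - m)\<close> of the Poisson solution, indexed from the
  top state so that the downward recursion becomes structural.\<close>

fun lyap_incr :: "real \<Rightarrow> nat \<Rightarrow> nat \<Rightarrow> real" where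
  "lyap_incr a N 0 = 1"
| "lyap_incr a N (Suc m) = 1 + up_ratio a N (N - Suc m) * lyap_incr a N m"

definition lyap :: "real \<Rightarrow> nat \<Rightarrow> nat \<Rightarrow> real" where
  "lyap a N l = (\<Sum>i=1..l. lyap_incr a N (N - i))"

lemma lyap_incr_ge_1:
  assumes "0 \<le> a" and "2 \<le> N" and "m < N"
  shows "1 \<le> lyap_incr a N m"
  using assms(3)
proof (induction m)
  case (Suc m)
  then have "0 \<le> up_ratio a N (N - Suc m)" using assms(1,2) by (intro up_ratio_nonneg) auto
  with Suc show ?case by simp
qed simp

lemma lyap_incr_le:
  assumes "0 \<le> a" and "2 \<le> N" and "m < N"
  shows "lyap_incr a N m \<le> (\<Sum>i\<le>m. (a / 4) ^ i)"
  using assms(3)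
proof (induction m)
  case (Suc m)
  have "lyap_incr a N (Suc m) = 1 + up_ratio a N (N - Suc m) * lyap_incr a N m" by simp
  also have "\<dots> \<le> 1 + a / 4 * (\<Sum>i\<le>m. (a / 4) ^ i)"
    using Suc assms lyap_incr_ge_1[OF assms(1,2), of m]
    by (intro add_left_mono mult_mono up_ratio_le up_ratio_nonneg) auto
  also have "\<dots> = (\<Sum>i\<le>Suc m. (a / 4) ^ i)"
    by (simp add: sum_distrib_left sum.atMost_Suc_shift del: sum.atMost_Suc)
  finally show ?case .
qed simp

lemma lyap_nonneg:
  assumes "0 \<le> a" and "2 \<le> N"
  shows "0 \<le> lyap a N l"
  unfolding lyap_def using assms lyap_incr_ge_1[OF assms]
  by (intro sum_nonneg) (force intro: order.trans[OF zero_le_one])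

lemma lyap_top_le:
  assumes "0 \<le> a" and "2 \<le> N"
  shows "lyap a N N \<le> (\<Sum>j=1..N. \<Sum>i=0..j. (a / 4) ^ i)"
proof -
  have "lyap a N N \<le> (\<Sum>j=1..N. \<Sum>i=0..N + 1 - j. (a / 4) ^ i)"
    unfolding lyap_def
  proof (rule sum_mono)
    fix j assume j: "j \<in> {1..N}"
    then have "lyap_incr a N (N - j) \<le> (\<Sum>i\<le>N - j. (a / 4) ^ i)"
      using assms by (intro lyap_incr_le) auto
    also have "\<dots> \<le> (\<Sum>i=0..N + 1 - j. (a / 4) ^ i)"
      using j assms by (intro sum_mono2) auto
    finally show "lyap_incr a N (N - j) \<le> (\<Sum>i=0..N + 1 - j. (a / 4) ^ i)" .
  qed
  also have "\<dots> = (\<Sum>j=1..N. \<Sum>i=0..j. (a / 4) ^ i)"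
    by (subst sum.atLeastAtMost_rev) (simp add: add.commute)
  finally show ?thesis .
qed

lemma gen_mult_lyap:
  assumes "k \<le> N"
  shows "(\<Sum>l\<in>{0..N}. gen a N k l * lyap a N l) = - real k"
proof (cases "k = 0")
  case True
  have "gen a N 0 l = 0" for l
    unfolding gen_def up_rate_def down_rate_def by auto
  then show ?thesis using True by simp
next
  case False
  have "(\<Sum>l\<in>{0..N}. gen a N k l * lyap a N l)
     = (\<Sum>l\<in>{0..N}. (if l = Suc k then up_rate a N k * lyap a N l else 0)
       + (if l = k - 1 then real k * lyap a N l else 0)
       + (if l = k then - (up_rate a N k + real k) * lyap a N l else 0))"
    using assms False by (intro sum.cong refl) (auto simp: gen_def down_rate_def)
  also have "\<dots> = (if Suc k \<le> N then up_rate a N k * lyap a N (Suc k) else 0)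
       + real k * lyap a N (k - 1) - (up_rate a N k + real k) * lyap a N k"
    using assms False by (auto simp: sum.distrib algebra_simps)
  also have "\<dots> = - real k"
  proof -
    have down: "lyap a N k = lyap a N (k - 1) + lyap_incr a N (N - k)"
      using False by (cases k) (auto simp: lyap_def)
    show ?thesis
    proof (cases "k = N")
      case True
      then show ?thesis using down by (simp add: up_rate_def algebra_simps)
    next
      case False
      then have "N - k = Suc (N - Suc k)" and "N - Suc (N - Suc k) = k" using assms by auto
      then have "lyap_incr a N (N - k) = 1 + up_ratio a N k * lyap_incr a N (N - Suc k)"
        by simp
      moreover have "lyap a N (Suc k) = lyap a N k + lyap_incr a N (N - Suc k)"
        by (simp add: lyap_def)
      ultimately show ?thesis
        using False assms down by (simp add: up_rate_eq_up_ratio algebra_simps)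
    qed
  qed
  finally show ?thesis .
qed

theorem lemma11p1:
  fixes a :: real and N :: nat
  assumes "a \<ge> 0" and "N \<ge> 2"
  shows "(\<Sum>j=1..N. real j * occ_time a N j) \<le> (\<Sum>j=1..N. \<Sum>i=0..j. (a / 4) ^ i)"
proof -
  have "(\<Sum>j=1..N. real j * occ_time a N j)
      = (\<Sum>j\<in>{0..N}. real j * (LBINT t:{0..}. mat_exp (gen a N) N t N j))"
    by (simp add: occ_time_eq_mat_exp sum.atLeast_Suc_atMost)
  also have "\<dots> \<le> lyap a N N"
    using assms by (intro mat_exp_occupation_bound gen_offdiag_nonneg lyap_nonneg gen_mult_lyap) auto
  also have "\<dots> \<le> (\<Sum>j=1..N. \<Sum>i=0..j. (a / 4) ^ i)"
    using assms by (rule lyap_top_le)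
  finally show ?thesis .
qed

end
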